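(* Let $\varepsilon>0$ and let $p:=c_3^2/c_2^2$, $c_1^2:=\min\{\varepsilon^2\omega_1/8,\ 1/4\}$, with the constants defined in the context. Let $g:[0,\infty)\to[0,\infty)$ and $\tilde g_1,\tilde g_2:[0,\infty)\times[0,\infty)\to[0,\infty)$ be continuous functions such that each $\tilde g_i(t,\eta)$ is non-decreasing in $\eta$, and such that: (i) there is $\sigma>0$ with $\int_{t_0}^t g(\tau)\,d\tau-p(t-t_0)\le\sigma$ for all $t\ge t_0\ge 0$; (ii) there are constants $\chi\in[0,1]$, $\kappa\in[0,1]$, $q\ge 0$ (with $q<p$ if $\chi=1$) and $M>0$ such that $\left|\frac{\int_0^t g(\tau)d\tau}{1+t^{\chi}}-q\right|<\frac{M}{1+t^{\kappa}}$ for all $t\ge0$; (iii) for every $\eta>0$, $\lim_{t\to+\infty}\tilde g_1(t,\eta)e^{\xi(t^{\chi}-t^{\kappa})}=0$ and $\int_0^\infty \tilde g_2(\tau,\eta)e^{\xi(\tau^{\chi}-\tau^{\kappa})}d\tau<+\infty$, where $\xi$ is some positive constant if $\chi>\kappa$ and $\xi=0$ if $\chi\le\kappa$. Set $g_i(t,\eta):=\tilde g_i(t,\eta/c_1^2)$ and consider the Cauchy problem $$\dot y=-p\,y+g(t)y+g_1(t,y)+g_2(t,y),\qquad y(t_0)=y_0\ge 0.$$ Then for every $\tilde\alpha>0$ there exist $\tilde s(\tilde\alpha)\ge 0$ and $\tilde\beta(\tilde\alpha)>0$ such that whenever $y_0\in[0,\tilde\alpha]$ and $t_0\ge\tilde s(\tilde\alpha)$,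 the solution $y(t;t_0,y_0)$ satisfies $0\le y(t;t_0,y_0)<\tilde\beta(\tilde\alpha)$ for all $t\ge t_0$.
   Context: $\omega_1:=\frac{\pi^4}{1+\pi^4}$, $\omega_2:=\frac{\pi^4}{1+\pi^2+\pi^4}$, $c_3^2:=\frac{\omega_2}{2}\varepsilon$, $c_2^2:=\max\{\varepsilon(1+\varepsilon)/2,\ (2+\varepsilon)/2\}$. *)

theory Defs
  imports "HOL-Analysis.Analysis"
begin

definition omega1 :: real where "omega1 = pi^4 / (1 + pi^4)"
definition omega2 :: real where "omega2 = pi^4 / (1 + pi^2 + pi^4)"

definition c3sq :: "real \<Rightarrow> real" where "c3sq \<epsilon> = omega2 / 2 * \<epsilon>"
definition c2sq :: "real \<Rightarrow> real" where
  "c2sq \<epsilon> = max (\<epsilon> * (1 + \<epsilon>) / 2) ((2 + \<epsilon>) / 2)"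
definition c1sq :: "real \<Rightarrow> real" where
  "c1sq \<epsilon> = min (\<epsilon>^2 * omega1 / 8) (1/4)"
definition pconst :: "real \<Rightarrow> real" where "pconst \<epsilon> = c3sq \<epsilon> / c2sq \<epsilon>"

(* real power t^a for t \<ge> 0 with the convention 0^0 = 1 (Isabelle's powr has 0 powr 0 = 0) *)
definition rpow :: "real \<Rightarrow> real \<Rightarrow> real" where
  "rpow t a = (if t = 0 then (if a = 0 then 1 else 0) else t powr a)"

end

theory Submission
  imports Defs
begin

(* Let P(tau, t) = exp (integral_tau^t g - p (t - tau)) be the propagator of the linear part
   y' = (g - p) y; condition (i) bounds it by exp sigma. While y stays below beta, monotonicity
   bounds the nonlinearity by h = gt1(., beta/c1sq) + gt2(., beta/c1sq), and variation of
   constants gives y(t) <= P(t0, t) y(t0) + integral_t0^t h(tau) P(tau, t) dtau. The integral is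
   at most 1/2 once t0 is large: for gt2 it is the tail of an integrable function; for gt1, if
   chi > kappa the weight exp (xi (t^chi - t^kappa)) forces gt1 = o(1/t^2), and if chi <= kappa
   condition (ii) makes P decay exponentially. With beta = exp sigma * alpha + 1, a first-crossing
   argument keeps y below beta. *)

definition propagator :: "(real \<Rightarrow> real) \<Rightarrow> real \<Rightarrow> real \<Rightarrow> real \<Rightarrow> real" where
  "propagator g p \<tau> t = exp (integral {\<tau>..t} g - p * (t - \<tau>))"

lemma propagator_pos: "0 < propagator g p \<tau> t"
  by (simp add: propagator_def)

lemma propagator_refl [simp]: "propagator g p t t = 1"
  by (simp add: propagator_def)

lemma has_real_derivative_propagator:
  assumes "continuous_on {a..b} g" "\<tau> \<in> {a..b}"
  shows "((\<lambda>\<tau>. propagator g p \<tau> b) has_real_derivative (p - g \<tau>) * propagator g p \<tau> b)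
           (at \<tau> within {a..b})"
  unfolding propagator_def
  by (auto intro!: derivative_eq_intros integral_has_real_derivative'[OF assms] simp: algebra_simps)

(* A majorant form of "integral over S of f is at most delta", which does not require f
   itself to be integrable. *)
definition upper_integral_le :: "(real \<Rightarrow> real) \<Rightarrow> real set \<Rightarrow> real \<Rightarrow> bool" where
  "upper_integral_le f S \<delta> \<longleftrightarrow> (\<exists>m. m integrable_on S \<and> integral S m \<le> \<delta> \<and> (\<forall>x\<in>S. f x \<le> m x))"

lemma upper_integral_leI:
  assumes "(m has_integral I) S" "I \<le> \<delta>" "\<And>x. x \<in> S \<Longrightarrow> f x \<le> m x"
  shows "upper_integral_le f S \<delta>"
  using assms unfolding upper_integral_le_def by (metis has_integral_integrable_integral)

lemma upper_integral_le_mono: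
  assumes "upper_integral_le f' S \<delta>" "\<And>x. x \<in> S \<Longrightarrow> f x \<le> f' x"
  shows "upper_integral_le f S \<delta>"
  using assms unfolding upper_integral_le_def by (meson order_trans)

lemma upper_integral_le_add:
  assumes "upper_integral_le f S \<delta>" "upper_integral_le f' S \<delta>'"
  shows "upper_integral_le (\<lambda>x. f x + f' x) S (\<delta> + \<delta>')"
proof -
  obtain m m' where "m integrable_on S" "integral S m \<le> \<delta>" "\<forall>x\<in>S. f x \<le> m x"
    and "m' integrable_on S" "integral S m' \<le> \<delta>'" "\<forall>x\<in>S. f' x \<le> m' x"
    using assms unfolding upper_integral_le_def by blast
  then show ?thesis
    by (intro upper_integral_leI[of "\<lambda>x. m x + m' x" "integral S m + integral S m'"]
        has_integral_add) (auto simp: has_integral_integral add_mono)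
qed

(* Integrating factor: y(tau) * propagator g p tau t1 has derivative f(tau) * propagator g p tau t1. *)
lemma variation_of_constants_le:
  fixes y g f :: "real \<Rightarrow> real"
  assumes "t0 \<le> t1" and g_cont: "continuous_on {t0..t1} g"
    and y_deriv: "\<And>t. t \<in> {t0..t1} \<Longrightarrow>
      (y has_real_derivative (- p * y t + g t * y t + f t)) (at t within {t0..t1})"
    and f_small: "upper_integral_le (\<lambda>\<tau>. f \<tau> * propagator g p \<tau> t1) {t0..t1} \<delta>"
  shows "y t1 \<le> propagator g p t0 t1 * y t0 + \<delta>"
proof -
  have "((\<lambda>\<tau>. f \<tau> * propagator g p \<tau> t1) has_integral
      (y t1 * propagator g p t1 t1 - y t0 * propagator g p t0 t1)) {t0..t1}"
  proof (rule fundamental_theorem_of_calculus[OF \<open>t0 \<le> t1\<close>])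
    fix \<tau> assume \<tau>: "\<tau> \<in> {t0..t1}"
    have "((\<lambda>\<tau>. y \<tau> * propagator g p \<tau> t1) has_real_derivative
        (- p * y \<tau> + g \<tau> * y \<tau> + f \<tau>) * propagator g p \<tau> t1 + (p - g \<tau>) * propagator g p \<tau> t1 * y \<tau>)
        (at \<tau> within {t0..t1})"
      using DERIV_mult[OF y_deriv[OF \<tau>] has_real_derivative_propagator[OF g_cont \<tau>]] .
    moreover have "(- p * y \<tau> + g \<tau> * y \<tau> + f \<tau>) * propagator g p \<tau> t1 + (p - g \<tau>) * propagator g p \<tau> t1 * y \<tau>
        = f \<tau> * propagator g p \<tau> t1"
      by (simp add: algebra_simps)
    ultimately show "((\<lambda>\<tau>. y \<tau> * propagator g p \<tau> t1) has_vector_derivative f \<tau> * propagator g p \<tau> t1)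
        (at \<tau> within {t0..t1})"
      by (simp add: has_real_derivative_iff_has_vector_derivative)
  qed
  then have "((\<lambda>\<tau>. f \<tau> * propagator g p \<tau> t1) has_integral
      (y t1 - y t0 * propagator g p t0 t1)) {t0..t1}"
    by simp
  moreover obtain m where "m integrable_on {t0..t1}" "integral {t0..t1} m \<le> \<delta>"
    "\<And>\<tau>. \<tau> \<in> {t0..t1} \<Longrightarrow> f \<tau> * propagator g p \<tau> t1 \<le> m \<tau>"
    using f_small unfolding upper_integral_le_def by blast
  ultimately have "y t1 - y t0 * propagator g p t0 t1 \<le> integral {t0..t1} m"
    using has_integral_le has_integral_integral by blast
  with \<open>integral {t0..t1} m \<le> \<delta>\<close> show ?thesis
    by (simp add: algebra_simps)
qed

lemma continuous_stays_below:
  fixes y :: "real \<Rightarrow> real"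
  assumes y_cont: "continuous_on {a..<b} y" and "y a < \<beta>"
    and step: "\<And>t. t \<in> {a..<b} \<Longrightarrow> (\<And>\<tau>. \<tau> \<in> {a..t} \<Longrightarrow> y \<tau> \<le> \<beta>) \<Longrightarrow> y t < \<beta>"
    and t: "t \<in> {a..<b}"
  shows "y t < \<beta>"
proof (rule ccontr)
  assume "\<not> y t < \<beta>"
  have y_cont_t: "continuous_on {a..t} y"
    using t by (intro continuous_on_subset[OF y_cont]) auto
  have crossing: "\<exists>x\<in>{a..u}. y x = \<beta>" if "u \<in> {a..t}" "\<beta> \<le> y u" for u
    using IVT'[of y a \<beta> u] that \<open>y a < \<beta>\<close> continuous_on_subset[OF y_cont_t, of "{a..u}"] by auto
  define S where "S = {a..t} \<inter> y -` {\<beta>}"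
  have "closed S"
    unfolding S_def by (intro continuous_closed_preimage y_cont_t) auto
  moreover have "S \<noteq> {}"
    using crossing[of t] t \<open>\<not> y t < \<beta>\<close> unfolding S_def by fastforce
  moreover have S_bdd: "bdd_below S"
    unfolding S_def by (auto intro: bdd_belowI[of _ a])
  ultimately have "Inf S \<in> S"
    by (intro closed_contains_Inf)
  then have first: "Inf S \<in> {a..<b}" "y (Inf S) = \<beta>"
    using t unfolding S_def by auto
  have "y \<tau> \<le> \<beta>" if "\<tau> \<in> {a..Inf S}" for \<tau>
  proof (rule ccontr)
    assume "\<not> y \<tau> \<le> \<beta>"
    moreover have "\<tau> \<in> {a..t}"
      using that \<open>Inf S \<in> S\<close> unfolding S_def by auto
    ultimately obtain x where "x \<in> {a..\<tau>}" "y x = \<beta>"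
      using crossing by fastforce
    then have "x \<in> S"
      using \<open>\<tau> \<in> {a..t}\<close> unfolding S_def by auto
    then have "Inf S \<le> x"
      by (rule cInf_lower[OF _ S_bdd])
    with \<open>x \<in> {a..\<tau>}\<close> that have "x = \<tau>"
      by auto
    with \<open>y x = \<beta>\<close> \<open>\<not> y \<tau> \<le> \<beta>\<close> show False
      by simp
  qed
  with step[OF first(1)] first(2) show False
    by auto
qed

lemma solution_stays_below:
  fixes y g h :: "real \<Rightarrow> real" and f :: "real \<Rightarrow> real \<Rightarrow> real"
  assumes y_deriv: "\<And>t. t \<in> {t0..<T} \<Longrightarrow>
      (y has_real_derivative (- p * y t + g t * y t + f t (y t))) (at t within {t0..<T})"
    and y_nonneg: "\<And>t. t \<in> {t0..<T} \<Longrightarrow> 0 \<le> y t"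
    and g_cont: "continuous_on {t0..<T} g"
    and f_le: "\<And>t v. t \<in> {t0..<T} \<Longrightarrow> 0 \<le> v \<Longrightarrow> v \<le> \<beta> \<Longrightarrow> f t v \<le> h t"
    and h_small: "\<And>t. t \<in> {t0..<T} \<Longrightarrow>
      upper_integral_le (\<lambda>\<tau>. h \<tau> * propagator g p \<tau> t) {t0..t} \<delta>"
    and start: "\<And>t. t \<in> {t0..<T} \<Longrightarrow> propagator g p t0 t * y t0 + \<delta> < \<beta>"
    and t: "t \<in> {t0..<T}"
  shows "y t < \<beta>"
proof (rule continuous_stays_below[OF _ _ _ t])
  show "continuous_on {t0..<T} y"
    using y_deriv DERIV_continuous continuous_on_eq_continuous_within by blast
  have "t0 \<in> {t0..<T}"
    using t by simp
  moreover from h_small[OF this] have "0 \<le> \<delta>"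
    by (auto simp: upper_integral_le_def)
  ultimately show "y t0 < \<beta>"
    using start[of t0] by simp
next
  fix t1 assume t1: "t1 \<in> {t0..<T}" and below: "\<And>\<tau>. \<tau> \<in> {t0..t1} \<Longrightarrow> y \<tau> \<le> \<beta>"
  have "y t1 \<le> propagator g p t0 t1 * y t0 + \<delta>"
  proof (rule variation_of_constants_le)
    show "continuous_on {t0..t1} g"
      using t1 by (intro continuous_on_subset[OF g_cont]) auto
    show "(y has_real_derivative (- p * y \<tau> + g \<tau> * y \<tau> + f \<tau> (y \<tau>))) (at \<tau> within {t0..t1})"
      if "\<tau> \<in> {t0..t1}" for \<tau>
      using that t1 by (intro has_field_derivative_subset[OF y_deriv]) auto
    show "upper_integral_le (\<lambda>\<tau>. f \<tau> (y \<tau>) * propagator g p \<tau> t1) {t0..t1} \<delta>"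
    proof (rule upper_integral_le_mono[OF h_small[OF t1]])
      fix \<tau> assume "\<tau> \<in> {t0..t1}"
      with t1 below y_nonneg have "f \<tau> (y \<tau>) \<le> h \<tau>"
        by (intro f_le) auto
      then show "f \<tau> (y \<tau>) * propagator g p \<tau> t1 \<le> h \<tau> * propagator g p \<tau> t1"
        by (simp add: propagator_pos less_imp_le)
    qed
  qed (use t1 in auto)
  with start[OF t1] show "y t1 < \<beta>"
    by simp
qed

lemma rpow_eq_powr: "0 < t \<Longrightarrow> rpow t a = t powr a"
  by (simp add: rpow_def)

lemma has_integral_inverse_square:
  fixes t0 t :: real
  assumes "0 < t0" "t0 \<le> t"
  shows "((\<lambda>x. 1 / x^2) has_integral (1 / t0 - 1 / t)) {t0..t}"
proof -
  have "((\<lambda>x. 1 / x^2) has_integral (- 1 / t - (- 1 / t0))) {t0..t}"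
  proof (rule fundamental_theorem_of_calculus[OF \<open>t0 \<le> t\<close>])
    fix x assume "x \<in> {t0..t}"
    with assms have "((\<lambda>x. - 1 / x) has_real_derivative 1 / x^2) (at x within {t0..t})"
      by (auto intro!: derivative_eq_intros simp: power2_eq_square field_simps)
    then show "((\<lambda>x. - 1 / x) has_vector_derivative 1 / x^2) (at x within {t0..t})"
      by (simp add: has_real_derivative_iff_has_vector_derivative)
  qed
  then show ?thesis
    by simp
qed

lemma has_integral_exp_decay:
  fixes c t0 t :: real
  assumes "0 < c" "t0 \<le> t"
  shows "((\<lambda>x. exp (- c * (t - x))) has_integral (1 - exp (- c * (t - t0))) / c) {t0..t}"
proof -
  have "((\<lambda>x. exp (- c * (t - x))) has_integral
      exp (- c * (t - t)) / c - exp (- c * (t - t0)) / c) {t0..t}"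
  proof (rule fundamental_theorem_of_calculus[OF \<open>t0 \<le> t\<close>])
    fix x assume "x \<in> {t0..t}"
    have "((\<lambda>x. exp (- c * (t - x)) / c) has_real_derivative exp (- c * (t - x))) (at x within {t0..t})"
      using \<open>0 < c\<close> by (auto intro!: derivative_eq_intros)
    then show "((\<lambda>x. exp (- c * (t - x)) / c) has_vector_derivative exp (- c * (t - x)))
        (at x within {t0..t})"
      by (simp add: has_real_derivative_iff_has_vector_derivative)
  qed
  then show ?thesis
    by (simp add: diff_divide_distrib)
qed

lemma eventually_tail_integral_le:
  fixes H :: "real \<Rightarrow> real"
  assumes H_int: "H integrable_on {0..}" and H_nonneg: "\<And>t. 0 \<le> t \<Longrightarrow> 0 \<le> H t" and "0 < \<delta>"
  shows "\<forall>\<^sub>F t0 in at_top. \<forall>t\<ge>t0. integral {t0..t} H \<le> \<delta>"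
proof -
  define I where "I t = integral {0..t} H" for t
  have H_int_on: "H integrable_on {a..b}" if "0 \<le> a" for a b
    using integrable_on_subinterval[OF H_int, of a b] that by auto
  have I_split: "I t = I a + integral {a..t} H" if "0 \<le> a" "a \<le> t" for a t
    unfolding I_def using that H_int_on[of 0 t]
      Henstock_Kurzweil_Integration.integral_combine[where a = 0 and c = a and b = t and f = H] by simp
  have "I t \<le> integral {0..} H" if "0 \<le> t" for t
    unfolding I_def using that H_nonneg by (intro integral_subset_le H_int_on H_int) auto
  then have "bdd_above (I ` {0..})"
    by (auto intro!: bdd_aboveI2)
  obtain t1 where "0 \<le> t1" "Sup (I ` {0..}) - \<delta> < I t1"
    using less_cSupE[of "Sup (I ` {0..}) - \<delta>" "I ` {0..}"] \<open>0 < \<delta>\<close> by auto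
  have "integral {t0..t} H \<le> \<delta>" if "t1 \<le> t0" "t0 \<le> t" for t0 t
  proof -
    have "I t \<le> Sup (I ` {0..})"
      using that \<open>0 \<le> t1\<close> \<open>bdd_above (I ` {0..})\<close> by (intro cSup_upper) auto
    moreover have "0 \<le> integral {t1..t0} H"
      using that \<open>0 \<le> t1\<close> H_nonneg by (intro integral_nonneg H_int_on) auto
    ultimately show ?thesis
      using I_split[of t0 t] I_split[of t1 t0] that \<open>0 \<le> t1\<close> \<open>Sup (I ` {0..}) - \<delta> < I t1\<close>
      by linarith
  qed
  then show ?thesis
    unfolding eventually_at_top_linorder by blast
qed

lemma eventually_powr_slope_le:
  fixes X q p :: real
  assumes "0 \<le> X" "X \<le> 1" "0 \<le> q" "0 < p" "X = 1 \<longrightarrow> q < p"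
  shows "\<exists>c>0. \<forall>\<^sub>F z in at_top. q * (X * z powr (X - 1)) \<le> p - c"
proof (cases "X = 1")
  case True
  have "\<forall>\<^sub>F z in at_top. q * (X * z powr (X - 1)) \<le> p - (p - q)"
    using eventually_gt_at_top[of 0] by eventually_elim (use True in auto)
  with True assms show ?thesis
    by (intro exI[of _ "p - q"]) auto
next
  case False
  with assms have "((\<lambda>z. q * (X * z powr (X - 1))) \<longlongrightarrow> q * (X * 0)) at_top"
    by (intro tendsto_intros tendsto_neg_powr filterlim_ident) auto
  then have "\<forall>\<^sub>F z in at_top. q * (X * z powr (X - 1)) < p / 2"
    by (rule order_tendstoD) (use assms in simp)
  then show ?thesis
    by (intro exI[of _ "p / 2"]) (auto elim: eventually_mono simp: assms)
qed

lemma eventually_powr_increment_le: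
  fixes X q p :: real
  assumes "0 \<le> X" "X \<le> 1" "0 \<le> q" "0 < p" "X = 1 \<longrightarrow> q < p"
  shows "\<exists>c>0. \<forall>\<^sub>F \<tau> in at_top. \<forall>t\<ge>\<tau>. q * (t powr X - \<tau> powr X) \<le> (p - c) * (t - \<tau>)"
proof -
  obtain c where "0 < c" and slope: "\<forall>\<^sub>F z in at_top. q * (X * z powr (X - 1)) \<le> p - c"
    using eventually_powr_slope_le[OF assms] by blast
  then obtain N where N: "\<And>z. N \<le> z \<Longrightarrow> q * (X * z powr (X - 1)) \<le> p - c"
    by (auto simp: eventually_at_top_linorder)
  have "q * (t powr X - \<tau> powr X) \<le> (p - c) * (t - \<tau>)" if "max N 1 \<le> \<tau>" "\<tau> \<le> t" for \<tau> t
  proof (cases "\<tau> = t")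
    case False
    have "\<tau> < t"
      using False that by simp
    moreover have "((\<lambda>x. x powr X) has_real_derivative X * x powr (X - 1)) (at x)" if "\<tau> \<le> x" for x
      using that \<open>max N 1 \<le> \<tau>\<close> by (intro has_real_derivative_powr) auto
    ultimately obtain z where z: "\<tau> < z" "z < t"
      and mvt: "t powr X - \<tau> powr X = (t - \<tau>) * (X * z powr (X - 1))"
      using MVT2[of \<tau> t "\<lambda>x. x powr X" "\<lambda>z. X * z powr (X - 1)"] by blast
    have "q * (t powr X - \<tau> powr X) = (t - \<tau>) * (q * (X * z powr (X - 1)))"
      by (simp add: mvt)
    also have "\<dots> \<le> (t - \<tau>) * (p - c)"
      using N[of z] z that by (intro mult_left_mono) auto
    finally show ?thesis
      by (simp add: mult.commute)
  qed simp
  then have "\<forall>\<^sub>F \<tau> in at_top. \<forall>t\<ge>\<tau>. q * (t powr X - \<tau> powr X) \<le> (p - c) * (t - \<tau>)"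
    unfolding eventually_at_top_linorder by blast
  with \<open>0 < c\<close> show ?thesis
    by blast
qed

(* With u = tau powr (d/2), d = X - K: 2 ln tau = (4/d) ln u <= (4/d) (u - 1) <= xi (u^2 - 1). *)
lemma two_ln_le_powr_diff:
  fixes X K \<xi> \<tau> :: real
  assumes "0 \<le> K" "K < X" "0 < \<xi>" and \<tau>: "max 1 ((1 + 4 / ((X - K) * \<xi>)) powr (2 / (X - K))) \<le> \<tau>"
  shows "2 * ln \<tau> \<le> \<xi> * (\<tau> powr X - \<tau> powr K)"
proof -
  define d where "d = X - K"
  define U where "U = 1 + 4 / (d * \<xi>)"
  define u where "u = \<tau> powr (d / 2)"
  have "0 < d" "1 \<le> U"
    using assms by (simp_all add: d_def U_def)
  have "1 \<le> \<tau>"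
    using \<tau> by simp
  have "U = (U powr (2 / d)) powr (d / 2)"
    using \<open>1 \<le> U\<close> \<open>0 < d\<close> by (simp add: powr_powr)
  also have "\<dots> \<le> u"
    unfolding u_def using \<tau> \<open>0 < d\<close> by (intro powr_mono2) (auto simp: d_def U_def)
  finally have "U \<le> u" .
  have "u^2 - 1 \<le> \<tau> powr X - \<tau> powr K"
  proof -
    have "u^2 = \<tau> powr d"
      unfolding u_def power2_eq_square by (simp flip: powr_add)
    moreover have "\<tau> powr X = \<tau> powr K * \<tau> powr d"
      unfolding d_def by (simp flip: powr_add)
    moreover have "1 \<le> \<tau> powr K" "1 \<le> \<tau> powr d"
      using \<open>1 \<le> \<tau>\<close> \<open>0 \<le> K\<close> \<open>0 < d\<close> by (simp_all add: ge_one_powr_ge_zero)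
    ultimately show ?thesis
      using mult_right_mono[of 1 "\<tau> powr K" "\<tau> powr d - 1"] by (simp add: algebra_simps)
  qed
  have "ln u \<le> u - 1"
    using \<open>U \<le> u\<close> \<open>1 \<le> U\<close> by (intro ln_le_minus_one) auto
  moreover have "ln u = d / 2 * ln \<tau>"
    unfolding u_def using \<open>1 \<le> \<tau>\<close> by (simp add: ln_powr)
  ultimately have "2 * ln \<tau> \<le> 4 / d * (u - 1)"
    using \<open>0 < d\<close> by (simp add: field_simps)
  also have "\<dots> \<le> \<xi> * (u + 1) * (u - 1)"
  proof (rule mult_right_mono)
    have "4 / d \<le> \<xi> * U"
      using assms \<open>0 < d\<close> by (simp add: U_def field_simps)
    also have "\<dots> \<le> \<xi> * (u + 1)"
      using \<open>U \<le> u\<close> assms by (intro mult_left_mono) auto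
    finally show "4 / d \<le> \<xi> * (u + 1)" .
  qed (use \<open>U \<le> u\<close> \<open>1 \<le> U\<close> in auto)
  also have "\<dots> = \<xi> * (u^2 - 1)"
    by (simp add: algebra_simps power2_eq_square)
  also have "\<dots> \<le> \<xi> * (\<tau> powr X - \<tau> powr K)"
    using \<open>u^2 - 1 \<le> \<tau> powr X - \<tau> powr K\<close> assms by (intro mult_left_mono) auto
  finally show ?thesis .
qed

lemma eventually_square_le_exp_powr_diff:
  fixes X K \<xi> :: real
  assumes "0 \<le> K" "K < X" "0 < \<xi>"
  shows "\<forall>\<^sub>F \<tau> in at_top. \<tau>^2 \<le> exp (\<xi> * (\<tau> powr X - \<tau> powr K))"
proof -
  have "\<tau>^2 \<le> exp (\<xi> * (\<tau> powr X - \<tau> powr K))"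
    if "max 1 ((1 + 4 / ((X - K) * \<xi>)) powr (2 / (X - K))) \<le> \<tau>" for \<tau>
  proof -
    have "0 < \<tau>"
      using that by simp
    then have "\<tau>^2 = exp (ln (\<tau>^2))"
      by simp
    also have "\<dots> = exp (2 * ln \<tau>)"
      using \<open>0 < \<tau>\<close> by (simp add: ln_realpow)
    also have "\<dots> \<le> exp (\<xi> * (\<tau> powr X - \<tau> powr K))"
      using two_ln_le_powr_diff[OF assms that] by simp
    finally show ?thesis .
  qed
  then show ?thesis
    unfolding eventually_at_top_linorder by blast
qed

(* Forcing h, switched on at any late enough time t0, raises the solution by at most delta
   on every window [t0, t]. *)
definition late_response_le :: "(real \<Rightarrow> real) \<Rightarrow> real \<Rightarrow> (real \<Rightarrow> real) \<Rightarrow> real \<Rightarrow> bool" where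
  "late_response_le g p h \<delta> \<longleftrightarrow>
     (\<forall>\<^sub>F t0 in at_top. \<forall>t\<ge>t0. upper_integral_le (\<lambda>\<tau>. h \<tau> * propagator g p \<tau> t) {t0..t} \<delta>)"

lemma late_response_le_add:
  assumes "late_response_le g p h \<delta>" "late_response_le g p h' \<delta>'"
  shows "late_response_le g p (\<lambda>\<tau>. h \<tau> + h' \<tau>) (\<delta> + \<delta>')"
  using assms unfolding late_response_le_def
proof eventually_elim
  case (elim t0)
  then show ?case
    by (auto simp: distrib_right dest: upper_integral_le_add)
qed

lemma late_response_leE:
  assumes "late_response_le g p h \<delta>"
  obtains s where "0 \<le> s"
    and "\<And>t0 t. s \<le> t0 \<Longrightarrow> t0 \<le> t \<Longrightarrow>
      upper_integral_le (\<lambda>\<tau>. h \<tau> * propagator g p \<tau> t) {t0..t} \<delta>"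
  using assms unfolding late_response_le_def eventually_at_top_linorder
  by (meson max.boundedE max.cobounded2)

lemma late_response_le_inverse_square:
  assumes h_nonneg: "\<And>\<tau>. 0 \<le> \<tau> \<Longrightarrow> 0 \<le> h \<tau>" and decay: "\<forall>\<^sub>F \<tau> in at_top. h \<tau> * \<tau>^2 \<le> 1"
    and prop_le: "\<And>\<tau> t. 0 \<le> \<tau> \<Longrightarrow> \<tau> \<le> t \<Longrightarrow> propagator g p \<tau> t \<le> exp \<sigma>" and "0 < \<delta>"
  shows "late_response_le g p h \<delta>"
proof -
  obtain N where N: "\<And>\<tau>. N \<le> \<tau> \<Longrightarrow> h \<tau> * \<tau>^2 \<le> 1"
    using decay by (auto simp: eventually_at_top_linorder)
  have "upper_integral_le (\<lambda>\<tau>. h \<tau> * propagator g p \<tau> t) {t0..t} \<delta>"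
    if t0: "max (max N 1) (exp \<sigma> / \<delta>) \<le> t0" and "t0 \<le> t" for t0 t
  proof (rule upper_integral_leI)
    show "((\<lambda>\<tau>. exp \<sigma> * (1 / \<tau>^2)) has_integral exp \<sigma> * (1 / t0 - 1 / t)) {t0..t}"
      using that by (intro has_integral_mult_right has_integral_inverse_square) auto
    have "exp \<sigma> * (1 / t0 - 1 / t) \<le> exp \<sigma> / t0"
      using that by (simp add: right_diff_distrib)
    also have "\<dots> \<le> \<delta>"
      using t0 \<open>0 < \<delta>\<close> by (simp add: pos_divide_le_eq field_simps)
    finally show "exp \<sigma> * (1 / t0 - 1 / t) \<le> \<delta>" .
  next
    fix \<tau> assume \<tau>: "\<tau> \<in> {t0..t}"
    then have "h \<tau> * \<tau>^2 \<le> 1" "0 \<le> h \<tau>" "1 \<le> \<tau>"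
      using t0 by (auto intro: N h_nonneg)
    then have "h \<tau> \<le> 1 / \<tau>^2"
      by (simp add: field_simps)
    moreover have "propagator g p \<tau> t \<le> exp \<sigma>"
      using \<tau> t0 by (intro prop_le) auto
    ultimately have "h \<tau> * propagator g p \<tau> t \<le> 1 / \<tau>^2 * exp \<sigma>"
      by (intro mult_mono) (auto simp: less_imp_le[OF propagator_pos])
    then show "h \<tau> * propagator g p \<tau> t \<le> exp \<sigma> * (1 / \<tau>^2)"
      by (simp add: mult.commute)
  qed
  then show ?thesis
    unfolding late_response_le_def eventually_at_top_linorder by blast
qed

lemma late_response_le_exp_decay:
  assumes h_nonneg: "\<And>\<tau>. 0 \<le> \<tau> \<Longrightarrow> 0 \<le> h \<tau>" and h_lim: "(h \<longlongrightarrow> 0) at_top" and "0 < c"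
    and prop_le: "\<forall>\<^sub>F \<tau> in at_top. \<forall>t\<ge>\<tau>. propagator g p \<tau> t \<le> exp (a - c * (t - \<tau>))"
    and "0 < \<delta>"
  shows "late_response_le g p h \<delta>"
proof -
  define \<epsilon> where "\<epsilon> = \<delta> * c * exp (- a)"
  have "0 < \<epsilon>"
    using \<open>0 < \<delta>\<close> \<open>0 < c\<close> by (simp add: \<epsilon>_def)
  with h_lim have "\<forall>\<^sub>F \<tau> in at_top. h \<tau> < \<epsilon>"
    by (rule order_tendstoD)
  with prop_le have "\<forall>\<^sub>F \<tau> in at_top. (\<forall>t\<ge>\<tau>. propagator g p \<tau> t \<le> exp (a - c * (t - \<tau>))) \<and> h \<tau> < \<epsilon>"
    by (rule eventually_conj)
  then obtain N where N: "\<And>\<tau> t. N \<le> \<tau> \<Longrightarrow> \<tau> \<le> t \<Longrightarrow>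
      h \<tau> < \<epsilon> \<and> propagator g p \<tau> t \<le> exp (a - c * (t - \<tau>))"
    by (auto simp: eventually_at_top_linorder)
  have "upper_integral_le (\<lambda>\<tau>. h \<tau> * propagator g p \<tau> t) {t0..t} \<delta>"
    if t0: "max N 0 \<le> t0" and "t0 \<le> t" for t0 t
  proof (rule upper_integral_leI)
    show "((\<lambda>\<tau>. \<delta> * c * exp (- c * (t - \<tau>))) has_integral
        \<delta> * c * ((1 - exp (- c * (t - t0))) / c)) {t0..t}"
      using that \<open>0 < c\<close> by (intro has_integral_mult_right has_integral_exp_decay) auto
    show "\<delta> * c * ((1 - exp (- c * (t - t0))) / c) \<le> \<delta>"
      using \<open>0 < c\<close> \<open>0 < \<delta>\<close> by simp
  next
    fix \<tau> assume \<tau>: "\<tau> \<in> {t0..t}"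
    then have "h \<tau> < \<epsilon>" "propagator g p \<tau> t \<le> exp (a - c * (t - \<tau>))" "0 \<le> h \<tau>"
      using N[of \<tau> t] h_nonneg[of \<tau>] t0 by auto
    then have "h \<tau> * propagator g p \<tau> t \<le> \<epsilon> * exp (a - c * (t - \<tau>))"
      by (intro mult_mono) (auto simp: less_imp_le[OF propagator_pos])
    also have "\<dots> = \<delta> * c * exp (- c * (t - \<tau>))"
      by (simp add: \<epsilon>_def mult.assoc flip: exp_add)
    finally show "h \<tau> * propagator g p \<tau> t \<le> \<delta> * c * exp (- c * (t - \<tau>))" .
  qed
  then show ?thesis
    unfolding late_response_le_def eventually_at_top_linorder by blast
qed

lemma late_response_le_integrable:
  assumes H_int: "H integrable_on {0..}" and H_nonneg: "\<And>\<tau>. 0 \<le> \<tau> \<Longrightarrow> 0 \<le> H \<tau>"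
    and h_le: "\<forall>\<^sub>F \<tau> in at_top. 0 \<le> h \<tau> \<and> h \<tau> \<le> H \<tau>"
    and prop_le: "\<And>\<tau> t. 0 \<le> \<tau> \<Longrightarrow> \<tau> \<le> t \<Longrightarrow> propagator g p \<tau> t \<le> exp \<sigma>" and "0 < \<delta>"
  shows "late_response_le g p h \<delta>"
proof -
  have "\<forall>\<^sub>F t0 in at_top. \<forall>t\<ge>t0. integral {t0..t} H \<le> \<delta> * exp (- \<sigma>)"
    using \<open>0 < \<delta>\<close> by (intro eventually_tail_integral_le H_int H_nonneg) auto
  with h_le have "\<forall>\<^sub>F t0 in at_top. (0 \<le> h t0 \<and> h t0 \<le> H t0) \<and>
      (\<forall>t\<ge>t0. integral {t0..t} H \<le> \<delta> * exp (- \<sigma>))"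
    by (rule eventually_conj)
  then obtain N where N: "\<And>t0 t. N \<le> t0 \<Longrightarrow> t0 \<le> t \<Longrightarrow>
      integral {t0..t} H \<le> \<delta> * exp (- \<sigma>) \<and> 0 \<le> h t0 \<and> h t0 \<le> H t0"
    by (auto simp: eventually_at_top_linorder)
  have "upper_integral_le (\<lambda>\<tau>. h \<tau> * propagator g p \<tau> t) {t0..t} \<delta>"
    if t0: "max N 0 \<le> t0" and "t0 \<le> t" for t0 t
  proof (rule upper_integral_leI)
    have "H integrable_on {t0..t}"
      using integrable_on_subinterval[OF H_int, of t0 t] t0 by auto
    then show "((\<lambda>\<tau>. exp \<sigma> * H \<tau>) has_integral exp \<sigma> * integral {t0..t} H) {t0..t}"
      by (intro has_integral_mult_right integrable_integral)
    have "exp \<sigma> * integral {t0..t} H \<le> exp \<sigma> * (\<delta> * exp (- \<sigma>))"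
      using N[of t0 t] that by (intro mult_left_mono) auto
    also have "\<dots> = \<delta>"
      by (simp add: exp_minus)
    finally show "exp \<sigma> * integral {t0..t} H \<le> \<delta>" .
  next
    fix \<tau> assume \<tau>: "\<tau> \<in> {t0..t}"
    then have "0 \<le> h \<tau>" "h \<tau> \<le> H \<tau>" "propagator g p \<tau> t \<le> exp \<sigma>"
      using N[of \<tau> \<tau>] t0 by (auto intro: prop_le)
    then have "h \<tau> * propagator g p \<tau> t \<le> H \<tau> * exp \<sigma>"
      by (intro mult_mono) (auto simp: less_imp_le[OF propagator_pos])
    then show "h \<tau> * propagator g p \<tau> t \<le> exp \<sigma> * H \<tau>"
      by (simp add: mult.commute)
  qed
  then show ?thesis
    unfolding late_response_le_def eventually_at_top_linorder by blast
qed

lemma late_response_le_fast_decay: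
  assumes h_nonneg: "\<And>\<tau>. 0 \<le> \<tau> \<Longrightarrow> 0 \<le> h \<tau>"
    and decay: "((\<lambda>\<tau>. h \<tau> * exp (\<xi> * (rpow \<tau> \<chi>\<^sub>0 - rpow \<tau> \<kappa>\<^sub>0))) \<longlongrightarrow> 0) at_top"
    and "0 \<le> \<kappa>\<^sub>0" "\<kappa>\<^sub>0 < \<chi>\<^sub>0" "0 < \<xi>"
    and prop_le: "\<And>\<tau> t. 0 \<le> \<tau> \<Longrightarrow> \<tau> \<le> t \<Longrightarrow> propagator g p \<tau> t \<le> exp \<sigma>" and "0 < \<delta>"
  shows "late_response_le g p h \<delta>"
proof (rule late_response_le_inverse_square[OF h_nonneg _ prop_le \<open>0 < \<delta>\<close>])
  have "\<forall>\<^sub>F \<tau> in at_top. h \<tau> * exp (\<xi> * (rpow \<tau> \<chi>\<^sub>0 - rpow \<tau> \<kappa>\<^sub>0)) < 1"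
    using order_tendstoD(2)[OF decay] by simp
  with eventually_square_le_exp_powr_diff[OF \<open>0 \<le> \<kappa>\<^sub>0\<close> \<open>\<kappa>\<^sub>0 < \<chi>\<^sub>0\<close> \<open>0 < \<xi>\<close>]
    eventually_gt_at_top[of 0]
  show "\<forall>\<^sub>F \<tau> in at_top. h \<tau> * \<tau>^2 \<le> 1"
  proof eventually_elim
    case (elim \<tau>)
    then have "h \<tau> * \<tau>^2 \<le> h \<tau> * exp (\<xi> * (rpow \<tau> \<chi>\<^sub>0 - rpow \<tau> \<kappa>\<^sub>0))"
      by (intro mult_left_mono h_nonneg) (auto simp: rpow_eq_powr)
    with elim show ?case
      by linarith
  qed
qed

lemma abs_sub_lt_of_normalized_bound:
  fixes x q M t :: real
  assumes "\<bar>x / (1 + t powr \<chi>\<^sub>0) - q\<bar> < M / (1 + t powr \<kappa>\<^sub>0)"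
    and "\<chi>\<^sub>0 \<le> \<kappa>\<^sub>0" "1 \<le> t" "0 < M"
  shows "\<bar>x - q * (1 + t powr \<chi>\<^sub>0)\<bar> < M"
proof -
  have D: "0 < 1 + t powr \<chi>\<^sub>0" "1 + t powr \<chi>\<^sub>0 \<le> 1 + t powr \<kappa>\<^sub>0"
    using assms by (auto intro: add_pos_nonneg powr_mono)
  have "\<bar>x - q * (1 + t powr \<chi>\<^sub>0)\<bar> / (1 + t powr \<chi>\<^sub>0) = \<bar>x / (1 + t powr \<chi>\<^sub>0) - q\<bar>"
    using D by (simp add: field_simps abs_divide)
  also have "\<dots> < M / (1 + t powr \<kappa>\<^sub>0)"
    by (fact assms(1))
  also have "\<dots> \<le> M / (1 + t powr \<chi>\<^sub>0)"
    using D \<open>0 < M\<close> by (intro divide_left_mono) auto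
  finally show ?thesis
    using D by (simp add: divide_less_cancel)
qed

lemma propagator_le_exp_decay:
  fixes g :: "real \<Rightarrow> real"
  assumes g_cont: "continuous_on {0..} g"
    and near: "\<And>t. 0 \<le> t \<Longrightarrow> \<bar>integral {0..t} g / (1 + rpow t \<chi>\<^sub>0) - q\<bar> < M / (1 + rpow t \<kappa>\<^sub>0)"
    and "\<chi>\<^sub>0 \<le> \<kappa>\<^sub>0" "0 \<le> \<chi>\<^sub>0" "\<chi>\<^sub>0 \<le> 1" "0 \<le> q" "0 < M" "0 < p" "\<chi>\<^sub>0 = 1 \<longrightarrow> q < p"
  shows "\<exists>a c. 0 < c \<and> (\<forall>\<^sub>F \<tau> in at_top. \<forall>t\<ge>\<tau>. propagator g p \<tau> t \<le> exp (a - c * (t - \<tau>)))"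
proof -
  have close: "\<bar>integral {0..t} g - q * (1 + t powr \<chi>\<^sub>0)\<bar> < M" if "1 \<le> t" for t
    using near[of t] that assms by (intro abs_sub_lt_of_normalized_bound) (auto simp: rpow_eq_powr)
  obtain c where "0 < c"
    and increment: "\<forall>\<^sub>F \<tau> in at_top. \<forall>t\<ge>\<tau>. q * (t powr \<chi>\<^sub>0 - \<tau> powr \<chi>\<^sub>0) \<le> (p - c) * (t - \<tau>)"
    using eventually_powr_increment_le[of \<chi>\<^sub>0 q p] assms by blast
  have "\<forall>\<^sub>F \<tau> in at_top. \<forall>t\<ge>\<tau>. propagator g p \<tau> t \<le> exp (2 * M - c * (t - \<tau>))"
    using increment eventually_ge_at_top[of 1]
  proof eventually_elim
    case (elim \<tau>)
    show ?case
    proof (intro allI impI)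
      fix t assume "\<tau> \<le> t"
      have "g integrable_on {0..t}"
        using elim \<open>\<tau> \<le> t\<close> by (intro integrable_continuous_interval continuous_on_subset[OF g_cont]) auto
      then have "integral {0..\<tau>} g + integral {\<tau>..t} g = integral {0..t} g"
        using Henstock_Kurzweil_Integration.integral_combine[where a = 0 and c = \<tau> and b = t and f = g]
          elim \<open>\<tau> \<le> t\<close> by simp
      with close[of \<tau>] close[of t] elim \<open>\<tau> \<le> t\<close>
      have "integral {\<tau>..t} g - p * (t - \<tau>) \<le> 2 * M - c * (t - \<tau>)"
        by (auto simp: algebra_simps)
      then show "propagator g p \<tau> t \<le> exp (2 * M - c * (t - \<tau>))"
        by (simp add: propagator_def)
    qed
  qed
  with \<open>0 < c\<close> show ?thesis
    by blast
qed

lemma exp_weight_ge_one: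
  assumes "1 \<le> \<tau>" "\<kappa>\<^sub>0 < \<chi>\<^sub>0 \<longrightarrow> 0 < \<xi>" "\<chi>\<^sub>0 \<le> \<kappa>\<^sub>0 \<longrightarrow> \<xi> = 0"
  shows "1 \<le> exp (\<xi> * (rpow \<tau> \<chi>\<^sub>0 - rpow \<tau> \<kappa>\<^sub>0))"
proof (cases "\<kappa>\<^sub>0 < \<chi>\<^sub>0")
  case True
  with assms have "\<tau> powr \<kappa>\<^sub>0 \<le> \<tau> powr \<chi>\<^sub>0"
    by (intro powr_mono) auto
  with True assms show ?thesis
    by (simp add: rpow_eq_powr)
qed (use assms in simp)

lemma late_response_le_weighted_limit:
  assumes h_nonneg: "\<And>\<tau>. 0 \<le> \<tau> \<Longrightarrow> 0 \<le> h \<tau>"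
    and decay: "((\<lambda>\<tau>. h \<tau> * exp (\<xi> * (rpow \<tau> \<chi>\<^sub>0 - rpow \<tau> \<kappa>\<^sub>0))) \<longlongrightarrow> 0) at_top"
    and \<xi>: "\<kappa>\<^sub>0 < \<chi>\<^sub>0 \<longrightarrow> 0 < \<xi>" "\<chi>\<^sub>0 \<le> \<kappa>\<^sub>0 \<longrightarrow> \<xi> = 0"
    and g_cont: "continuous_on {0..} g"
    and near: "\<And>t. 0 \<le> t \<Longrightarrow> \<bar>integral {0..t} g / (1 + rpow t \<chi>\<^sub>0) - q\<bar> < M / (1 + rpow t \<kappa>\<^sub>0)"
    and chi: "0 \<le> \<chi>\<^sub>0" "\<chi>\<^sub>0 \<le> 1" and "0 \<le> \<kappa>\<^sub>0"
    and q: "0 \<le> q" "\<chi>\<^sub>0 = 1 \<longrightarrow> q < p" and "0 < M" "0 < p"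
    and prop_le: "\<And>\<tau> t. 0 \<le> \<tau> \<Longrightarrow> \<tau> \<le> t \<Longrightarrow> propagator g p \<tau> t \<le> exp \<sigma>" and "0 < \<delta>"
  shows "late_response_le g p h \<delta>"
proof (cases "\<kappa>\<^sub>0 < \<chi>\<^sub>0")
  case True
  with \<xi> have "0 < \<xi>"
    by simp
  with True show ?thesis
    by (intro late_response_le_fast_decay[OF h_nonneg decay \<open>0 \<le> \<kappa>\<^sub>0\<close> _ _ prop_le \<open>0 < \<delta>\<close>])
next
  case False
  then have "\<chi>\<^sub>0 \<le> \<kappa>\<^sub>0"
    by simp
  then obtain a c where "0 < c"
    and prop_decay: "\<forall>\<^sub>F \<tau> in at_top. \<forall>t\<ge>\<tau>. propagator g p \<tau> t \<le> exp (a - c * (t - \<tau>))"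
    using propagator_le_exp_decay[OF g_cont near _ chi q(1) \<open>0 < M\<close> \<open>0 < p\<close> q(2)] by blast
  have "(h \<longlongrightarrow> 0) at_top"
    using decay \<xi>(2) \<open>\<chi>\<^sub>0 \<le> \<kappa>\<^sub>0\<close> by simp
  from late_response_le_exp_decay[OF h_nonneg this \<open>0 < c\<close> prop_decay \<open>0 < \<delta>\<close>] show ?thesis .
qed

lemma late_response_le_weighted_integrable:
  assumes h_nonneg: "\<And>\<tau>. 0 \<le> \<tau> \<Longrightarrow> 0 \<le> h \<tau>"
    and h_int: "(\<lambda>\<tau>. h \<tau> * exp (\<xi> * (rpow \<tau> \<chi>\<^sub>0 - rpow \<tau> \<kappa>\<^sub>0))) integrable_on {0..}"
    and \<xi>: "\<kappa>\<^sub>0 < \<chi>\<^sub>0 \<longrightarrow> 0 < \<xi>" "\<chi>\<^sub>0 \<le> \<kappa>\<^sub>0 \<longrightarrow> \<xi> = 0"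
    and prop_le: "\<And>\<tau> t. 0 \<le> \<tau> \<Longrightarrow> \<tau> \<le> t \<Longrightarrow> propagator g p \<tau> t \<le> exp \<sigma>" and "0 < \<delta>"
  shows "late_response_le g p h \<delta>"
proof (rule late_response_le_integrable[OF h_int _ _ prop_le \<open>0 < \<delta>\<close>])
  show "0 \<le> h \<tau> * exp (\<xi> * (rpow \<tau> \<chi>\<^sub>0 - rpow \<tau> \<kappa>\<^sub>0))" if "0 \<le> \<tau>" for \<tau>
    using h_nonneg[OF that] by simp
  show "\<forall>\<^sub>F \<tau> in at_top. 0 \<le> h \<tau> \<and> h \<tau> \<le> h \<tau> * exp (\<xi> * (rpow \<tau> \<chi>\<^sub>0 - rpow \<tau> \<kappa>\<^sub>0))"
    using eventually_ge_at_top[of 1]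
  proof eventually_elim
    case (elim \<tau>)
    with h_nonneg[of \<tau>] exp_weight_ge_one[OF elim \<xi>] show ?case
      by (simp add: mult_le_cancel_left1)
  qed
qed

lemma pconst_pos: "0 < \<epsilon> \<Longrightarrow> 0 < pconst \<epsilon>"
  unfolding pconst_def c3sq_def c2sq_def omega2_def by (auto simp: add_pos_pos less_max_iff_disj)

lemma c1sq_pos: "0 < \<epsilon> \<Longrightarrow> 0 < c1sq \<epsilon>"
  unfolding c1sq_def omega1_def by (simp add: add_pos_pos)

theorem lemma1:
  fixes \<epsilon> \<chi>\<^sub>0 \<kappa>\<^sub>0 q M :: real and g :: "real \<Rightarrow> real" and gt1 gt2 :: "real \<Rightarrow> real \<Rightarrow> real"
  assumes eps: "\<epsilon> > 0"
    and g_cont: "continuous_on {0..} g" and g_nonneg: "\<And>t. t \<ge> 0 \<Longrightarrow> g t \<ge> 0"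
    and gt1_cont: "continuous_on ({0..} \<times> {0..}) (\<lambda>(t, \<eta>). gt1 t \<eta>)"
    and gt2_cont: "continuous_on ({0..} \<times> {0..}) (\<lambda>(t, \<eta>). gt2 t \<eta>)"
    and gt1_nonneg: "\<And>t \<eta>. t \<ge> 0 \<Longrightarrow> \<eta> \<ge> 0 \<Longrightarrow> gt1 t \<eta> \<ge> 0"
    and gt2_nonneg: "\<And>t \<eta>. t \<ge> 0 \<Longrightarrow> \<eta> \<ge> 0 \<Longrightarrow> gt2 t \<eta> \<ge> 0"
    and gt1_mono: "\<And>t \<eta> \<eta>'. t \<ge> 0 \<Longrightarrow> 0 \<le> \<eta> \<Longrightarrow> \<eta> \<le> \<eta>' \<Longrightarrow> gt1 t \<eta> \<le> gt1 t \<eta>'"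
    and gt2_mono: "\<And>t \<eta> \<eta>'. t \<ge> 0 \<Longrightarrow> 0 \<le> \<eta> \<Longrightarrow> \<eta> \<le> \<eta>' \<Longrightarrow> gt2 t \<eta> \<le> gt2 t \<eta>'"
    and cond_i: "\<exists>\<sigma>>0. \<forall>t0 t. 0 \<le> t0 \<longrightarrow> t0 \<le> t \<longrightarrow>
                    integral {t0..t} g - pconst \<epsilon> * (t - t0) \<le> \<sigma>"
    and chi: "0 \<le> \<chi>\<^sub>0" "\<chi>\<^sub>0 \<le> 1" and kappa: "0 \<le> \<kappa>\<^sub>0" "\<kappa>\<^sub>0 \<le> 1"
    and q: "q \<ge> 0" "\<chi>\<^sub>0 = 1 \<longrightarrow> q < pconst \<epsilon>" and M: "M > 0"
    and cond_ii: "\<And>t. t \<ge> 0 \<Longrightarrow>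
        \<bar>integral {0..t} g / (1 + rpow t \<chi>\<^sub>0) - q\<bar> < M / (1 + rpow t \<kappa>\<^sub>0)"
    and cond_iii: "\<exists>\<xi>::real. (\<chi>\<^sub>0 > \<kappa>\<^sub>0 \<longrightarrow> \<xi> > 0) \<and> (\<chi>\<^sub>0 \<le> \<kappa>\<^sub>0 \<longrightarrow> \<xi> = 0) \<and>
        (\<forall>\<eta>>0. ((\<lambda>t. gt1 t \<eta> * exp (\<xi> * (rpow t \<chi>\<^sub>0 - rpow t \<kappa>\<^sub>0))) \<longlongrightarrow> 0) at_top \<and>
                 (\<lambda>\<tau>. gt2 \<tau> \<eta> * exp (\<xi> * (rpow \<tau> \<chi>\<^sub>0 - rpow \<tau> \<kappa>\<^sub>0))) integrable_on {0..})"
  shows "\<forall>\<alpha>>0. \<exists>s\<ge>0. \<exists>\<beta>>0. \<forall>y0 t0 T (y :: real \<Rightarrow> real).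
           0 \<le> y0 \<longrightarrow> y0 \<le> \<alpha> \<longrightarrow> s \<le> t0 \<longrightarrow> t0 < T \<longrightarrow> y t0 = y0 \<longrightarrow>
           (\<forall>t\<in>{t0..<T}. y t \<ge> 0 \<and>
              (y has_real_derivative
                 (- pconst \<epsilon> * y t + g t * y t + gt1 t (y t / c1sq \<epsilon>) + gt2 t (y t / c1sq \<epsilon>)))
                 (at t within {t0..<T})) \<longrightarrow>
           (\<forall>t\<in>{t0..<T}. 0 \<le> y t \<and> y t < \<beta>)"
proof (intro allI impI, goal_cases)
  case (1 \<alpha>)
  define p c where "p = pconst \<epsilon>" and "c = c1sq \<epsilon>"
  have "0 < p" "0 < c"
    using eps by (simp_all add: p_def c_def pconst_pos c1sq_pos)
  obtain \<sigma> where prop_le: "\<And>\<tau> t. 0 \<le> \<tau> \<Longrightarrow> \<tau> \<le> t \<Longrightarrow> propagator g p \<tau> t \<le> exp \<sigma>"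
    using cond_i by (auto simp: propagator_def p_def)
  obtain \<xi> where \<xi>: "\<kappa>\<^sub>0 < \<chi>\<^sub>0 \<longrightarrow> 0 < \<xi>" "\<chi>\<^sub>0 \<le> \<kappa>\<^sub>0 \<longrightarrow> \<xi> = 0"
    and gt1_decay: "\<And>\<eta>. 0 < \<eta> \<Longrightarrow>
      ((\<lambda>t. gt1 t \<eta> * exp (\<xi> * (rpow t \<chi>\<^sub>0 - rpow t \<kappa>\<^sub>0))) \<longlongrightarrow> 0) at_top"
    and gt2_int: "\<And>\<eta>. 0 < \<eta> \<Longrightarrow>
      (\<lambda>\<tau>. gt2 \<tau> \<eta> * exp (\<xi> * (rpow \<tau> \<chi>\<^sub>0 - rpow \<tau> \<kappa>\<^sub>0))) integrable_on {0..}"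
    using cond_iii by blast
  define \<beta> where "\<beta> = exp \<sigma> * \<alpha> + 1"
  define \<eta> where "\<eta> = \<beta> / c"
  have "0 < \<beta>" "0 < \<eta>"
    using \<open>0 < \<alpha>\<close> \<open>0 < c\<close> by (simp_all add: \<eta>_def \<beta>_def add_pos_nonneg)
  have "late_response_le g p (\<lambda>\<tau>. gt1 \<tau> \<eta>) (1/4)"
    using gt1_nonneg \<open>0 < \<eta>\<close> by (intro late_response_le_weighted_limit[OF _ gt1_decay[OF \<open>0 < \<eta>\<close>]
        \<xi> g_cont cond_ii chi kappa(1) q(1) q(2)[folded p_def] M \<open>0 < p\<close> prop_le]) auto
  moreover have "late_response_le g p (\<lambda>\<tau>. gt2 \<tau> \<eta>) (1/4)"
    using gt2_nonneg \<open>0 < \<eta>\<close>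
    by (intro late_response_le_weighted_integrable[OF _ gt2_int[OF \<open>0 < \<eta>\<close>] \<xi> prop_le]) auto
  ultimately have "late_response_le g p (\<lambda>\<tau>. gt1 \<tau> \<eta> + gt2 \<tau> \<eta>) (1/2)"
    using late_response_le_add by fastforce
  then obtain s where "0 \<le> s" and response: "\<And>t0 t. s \<le> t0 \<Longrightarrow> t0 \<le> t \<Longrightarrow>
      upper_integral_le (\<lambda>\<tau>. (gt1 \<tau> \<eta> + gt2 \<tau> \<eta>) * propagator g p \<tau> t) {t0..t} (1/2)"
    by (rule late_response_leE) blast
  have "y t < \<beta>"
    if y0: "0 \<le> y0" "y0 \<le> \<alpha>" "y t0 = y0" and "s \<le> t0" and t: "t \<in> {t0..<T}"
      and solution: "\<forall>t\<in>{t0..<T}. y t \<ge> 0 \<and>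
        (y has_real_derivative
           (- pconst \<epsilon> * y t + g t * y t + gt1 t (y t / c1sq \<epsilon>) + gt2 t (y t / c1sq \<epsilon>)))
         (at t within {t0..<T})"
    for y0 t0 T t and y :: "real \<Rightarrow> real"
  proof (rule solution_stays_below[where f = "\<lambda>t v. gt1 t (v / c) + gt2 t (v / c)"
        and h = "\<lambda>\<tau>. gt1 \<tau> \<eta> + gt2 \<tau> \<eta>" and \<delta> = "1/2", OF _ _ _ _ _ _ t])
    show "(y has_real_derivative (- p * y t + g t * y t + (gt1 t (y t / c) + gt2 t (y t / c))))
        (at t within {t0..<T})" if "t \<in> {t0..<T}" for t
      using solution that by (simp add: p_def c_def add.assoc)
    show "continuous_on {t0..<T} g"
      using \<open>0 \<le> s\<close> \<open>s \<le> t0\<close> by (intro continuous_on_subset[OF g_cont]) auto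
    show "gt1 t (v / c) + gt2 t (v / c) \<le> gt1 t \<eta> + gt2 t \<eta>"
      if "t \<in> {t0..<T}" "0 \<le> v" "v \<le> \<beta>" for t v
      using that \<open>0 \<le> s\<close> \<open>s \<le> t0\<close> \<open>0 < c\<close>
      by (intro add_mono gt1_mono gt2_mono) (auto simp: \<eta>_def divide_right_mono)
    show "propagator g p t0 t * y t0 + 1/2 < \<beta>" if "t \<in> {t0..<T}" for t
      using prop_le[of t0 t] mult_mono[of "propagator g p t0 t" "exp \<sigma>" y0 \<alpha>]
        that y0 \<open>0 \<le> s\<close> \<open>s \<le> t0\<close> by (simp add: \<beta>_def less_imp_le[OF propagator_pos])
  qed (use solution \<open>s \<le> t0\<close> response in auto)
  with \<open>0 \<le> s\<close> \<open>0 < \<beta>\<close> show ?case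
    by blast
qed

end
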